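(* There exists an absolute constant $C>0$ such that the following holds. Let $n\ge1$, $0<q\le 1-\frac2n$ and $\pi\sim\mu_{n,q}$. Let $1\le m\le n$ and let $I=(i_1,\dots,i_m)\subseteq\{1,\dots,n\}$ be an increasing sequence of integers. Then $$\mathbb{P}\big(\pi(i_{k+1})>\pi(i_k)\text{ for all }1\le k\le m-1\big)\le\left(\frac{Cn(1-q)}{m}\right)^m.$$
   Context: For $q>0$ and $n\ge1$, $\mu_{n,q}(\pi)=q^{\mathrm{inv}(\pi)}/Z_{n,q}$ on $S_n$, with $\mathrm{inv}(\pi)$ the number of pairs $i<j$ with $\pi(i)>\pi(j)$ and $Z_{n,q}$ a normalizing constant. *)

theory Defs
  imports "HOL-Combinatorics.Permutations" Complex_Main
begin

definition perms :: "nat \<Rightarrow> (nat \<Rightarrow> nat) set" where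
  "perms n = {p. p permutes {1..n}}"

definition inv_count :: "nat \<Rightarrow> (nat \<Rightarrow> nat) \<Rightarrow> nat" where
  "inv_count n p = card {(i, j). i \<in> {1..n} \<and> j \<in> {1..n} \<and> i < j \<and> p i > p j}"

definition Z_mallows :: "nat \<Rightarrow> real \<Rightarrow> real" where
  "Z_mallows n q = (\<Sum>p\<in>perms n. q ^ inv_count n p)"

definition mallows :: "nat \<Rightarrow> real \<Rightarrow> (nat \<Rightarrow> nat) \<Rightarrow> real" where
  "mallows n q p = (if p \<in> perms n then q ^ inv_count n p / Z_mallows n q else 0)"

definition mallows_prob :: "nat \<Rightarrow> real \<Rightarrow> ((nat \<Rightarrow> nat) \<Rightarrow> bool) \<Rightarrow> real" where
  "mallows_prob n q A = (\<Sum>p\<in>{p \<in> perms n. A p}. mallows n q p)"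

end

theory Submission
  imports Defs
begin

text \<open>
  Write \<open>l = 1 - q\<close> and cut \<open>{1..n}\<close> into \<open>t \<approx> 2nl\<close> windows of length \<open>K \<approx> 1/(2l)\<close>;
  let \<open>B_b\<close> be the chosen positions in window \<open>b\<close>. Precomposing a permutation with a
  permutation of \<open>B_b\<close> creates at most \<open>2|B_b|K\<close> new inversions, and every permutation arises
  at most once as \<open>p \<circ> \<tau>\<close> with \<open>p\<close> increasing on \<open>B_b\<close>. So being increasing on all blocks
  has probability at most \<open>1 / \<Prod>_b |B_b|! q^(2|B_b|K)\<close>, where \<open>q^(2K) \<ge> e^-4\<close>. The multinomial
  bound \<open>m! \<le> t^m \<Prod>_b |B_b|!\<close> together with \<open>m! \<ge> (m/e)^m\<close> turns this into \<open>(e^5 t/m)^m\<close>.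
\<close>

lemma permutes_strict_mono_on_eq_id:
  fixes \<rho> :: "'a::wellorder \<Rightarrow> 'a"
  assumes perm: "\<rho> permutes P" and mono: "strict_mono_on P \<rho>"
  shows "\<rho> = id"
proof -
  \<comment> \<open>A least point moved down by \<open>\<sigma>\<close> would have its image moved down as well.\<close>
  have le_self: "x \<le> \<sigma> x"
    if "\<sigma> permutes P" "strict_mono_on P \<sigma>" "x \<in> P" for \<sigma> x
    using that(3)
  proof (induction x rule: less_induct)
    case (less x)
    show ?case
    proof (rule ccontr)
      assume "\<not> x \<le> \<sigma> x"
      then have "\<sigma> x < x" by simp
      moreover have "\<sigma> x \<in> P" using less.prems permutes_in_image[OF that(1)] by simp
      ultimately have "\<sigma> x \<le> \<sigma> (\<sigma> x)" and "\<sigma> (\<sigma> x) < \<sigma> x"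
        using less.IH strict_mono_onD[OF that(2)] less.prems by auto
      then show False by simp
    qed
  qed
  have inv_perm: "inv \<rho> permutes P" using perm by (rule permutes_inv)
  have "strict_mono_on P (inv \<rho>)"
  proof (rule strict_mono_onI)
    fix x y assume "x \<in> P" "y \<in> P" "x < y"
    then show "inv \<rho> x < inv \<rho> y"
      using strict_mono_on_less[OF mono] permutes_in_image[OF inv_perm] permutes_inverses(1)[OF perm]
      by metis
  qed
  then have "\<rho> x \<le> x" if "x \<in> P" for x
    using le_self[OF inv_perm, of "\<rho> x"] that permutes_in_image[OF perm] permutes_inverses(2)[OF perm]
    by simp
  then have "\<rho> x = x" for x
    using le_self[OF perm mono, of x] permutes_not_in[OF perm, of x] by (metis order.antisym)
  then show ?thesis by auto
qed

lemma comp_permutes_inj_on: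
  fixes P :: "'a::wellorder set"
  shows "inj_on (\<lambda>(p, \<tau>). p \<circ> \<tau>) ({p :: 'a \<Rightarrow> 'b::preorder. strict_mono_on P p} \<times> {\<tau>. \<tau> permutes P})"
proof (rule inj_onI, clarsimp)
  fix p p' :: "'a \<Rightarrow> 'b" and \<tau> \<tau>' assume p: "strict_mono_on P p" and p': "strict_mono_on P p'"
    and tau: "\<tau> permutes P" and tau': "\<tau>' permutes P" and eq: "p \<circ> \<tau> = p' \<circ> \<tau>'"
  define \<rho> where "\<rho> = \<tau>' \<circ> inv \<tau>"
  have perm: "\<rho> permutes P" unfolding \<rho>_def using permutes_inv[OF tau] tau' by (rule permutes_compose)
  have "p' \<circ> \<rho> = p \<circ> (\<tau> \<circ> inv \<tau>)"
    unfolding \<rho>_def by (simp add: o_assoc eq)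
  then have p_eq: "p = p' \<circ> \<rho>"
    by (simp add: permutes_inv_o(1)[OF tau])
  have "strict_mono_on P \<rho>"
  proof (rule strict_mono_onI)
    fix x y assume "x \<in> P" "y \<in> P" "x < y"
    then show "\<rho> x < \<rho> y"
      using strict_mono_onD[OF p] strict_mono_on_less[OF p'] permutes_in_image[OF perm] p_eq by auto
  qed
  with perm have "\<rho> = id" by (rule permutes_strict_mono_on_eq_id)
  moreover have "\<tau>' = \<rho> \<circ> \<tau>"
    unfolding \<rho>_def by (simp add: o_assoc[symmetric] permutes_inv_o(2)[OF tau])
  ultimately show "p = p' \<and> \<tau> = \<tau>'" using p_eq by simp
qed

lemma fact_sum_le_prod_fact_mult_power:
  fixes s :: "nat \<Rightarrow> nat"
  shows "fact (\<Sum>b<t. s b) \<le> (\<Prod>b<t. fact (s b)) * t ^ (\<Sum>b<t. s b)"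
proof (induction t)
  case 0
  show ?case by simp
next
  case (Suc t)
  define S where "S = (\<Sum>b<t. s b)"
  have "(S + s t choose S) * t ^ S \<le> (\<Sum>k\<le>S + s t. (S + s t choose k) * t ^ k)"
    by (rule member_le_sum) auto
  also have "\<dots> = (t + 1) ^ (S + s t)"
    using binomial[of t 1 "S + s t"] by (simp add: add.commute)
  finally have binom: "(S + s t choose S) * t ^ S \<le> Suc t ^ (S + s t)" by simp
  have "fact (S + s t) = (S + s t choose S) * fact S * fact (s t)"
    using binomial_fact_lemma[of S "S + s t"] by (simp add: mult_ac)
  also have "\<dots> \<le> (S + s t choose S) * ((\<Prod>b<t. fact (s b)) * t ^ S) * fact (s t)"
    using Suc.IH unfolding S_def by (intro mult_le_mono) auto
  also have "\<dots> = ((S + s t choose S) * t ^ S) * ((\<Prod>b<t. fact (s b)) * fact (s t))"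
    by (simp add: mult_ac)
  also have "\<dots> \<le> Suc t ^ (S + s t) * ((\<Prod>b<t. fact (s b)) * fact (s t))"
    using binom by (rule mult_le_mono1)
  finally show ?case unfolding S_def by (simp add: mult_ac)
qed

lemma power_le_exp_mult_fact:
  fixes x :: real
  assumes "0 \<le> x"
  shows "x ^ n \<le> exp x * fact n"
proof -
  have "(\<Sum>k\<in>{n}. x ^ k /\<^sub>R fact k) \<le> (\<Sum>k. x ^ k /\<^sub>R fact k)"
    using assms summable_exp_generic[of x] by (intro sum_le_suminf) auto
  then have "x ^ n / fact n \<le> exp x"
    using sums_unique[OF exp_converges[of x]] by (simp add: divide_inverse_commute)
  then show ?thesis by (simp add: pos_divide_le_eq)
qed

lemma exp_neg_twice_le_one_minus:
  fixes l :: real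
  assumes "0 \<le> l" "l \<le> 1/2"
  shows "exp (- (2 * l)) \<le> 1 - l"
proof -
  have "exp (- (2 * l)) * (1 + 2 * l) \<le> exp (- (2 * l)) * exp (2 * l)"
    using exp_ge_add_one_self[of "2 * l"] by (intro mult_left_mono) (auto simp: add.commute)
  also have "\<dots> = 1" by (simp add: exp_add[symmetric])
  also have "\<dots> \<le> (1 - l) * (1 + 2 * l)"
    using mult_nonneg_nonneg[of l "1 - 2 * l"] assms by (simp add: algebra_simps)
  finally show ?thesis using assms by (simp add: mult_le_cancel_right)
qed

lemma exp_neg_four_le_power:
  fixes l :: real
  assumes "0 \<le> l" "l \<le> 1/2" "real K * l \<le> 1"
  shows "exp (-4) \<le> (1 - l) ^ (2 * K)"
proof -
  have "exp (-4) \<le> exp (- (2 * l)) ^ (2 * K)"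
    using assms(3) by (simp add: exp_of_nat_mult[symmetric])
  also have "\<dots> \<le> (1 - l) ^ (2 * K)"
    using exp_neg_twice_le_one_minus[OF assms(1,2)] by (intro power_mono) auto
  finally show ?thesis .
qed

lemma ex_nat_between_inverses:
  fixes l :: real
  assumes "0 < l" "l \<le> 1/2"
  shows "\<exists>K::nat. 1 \<le> K \<and> 1 / real K \<le> 2 * l \<and> real K * l \<le> 1"
proof -
  define K where "K = nat \<lceil>1 / (2 * l)\<rceil>"
  have K_ge: "1 / (2 * l) \<le> real K" and K_lt: "real K < 1 / (2 * l) + 1"
    unfolding K_def using assms ceiling_correct[of "1 / (2 * l)"] by auto
  have "0 < 1 / (2 * l)" using assms by simp
  then have K_pos: "0 < real K" using K_ge by linarith
  moreover have "1 / real K \<le> 2 * l" using K_ge K_pos assms by (simp add: field_simps)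
  moreover have "real K * l < 1/2 + l" using K_lt assms by (simp add: field_simps)
  ultimately show ?thesis using assms by (intro exI[of _ K]) auto
qed

lemma strict_mono_on_atLeastAtMost_Suc:
  fixes f :: "nat \<Rightarrow> 'a::order"
  assumes "\<And>k. a \<le> k \<Longrightarrow> k < b \<Longrightarrow> f k < f (Suc k)"
  shows "strict_mono_on {a..b} f"
proof (rule strict_mono_onI)
  fix x y assume "x \<in> {a..b}" "y \<in> {a..b}" "x < y"
  then have "Suc x \<le> y" and "y \<le> b" "a \<le> x" by auto
  then show "f x < f y"
  proof (induction y rule: dec_induct)
    case base
    then show ?case using assms by simp
  next
    case (step k)
    then show ?case using assms[of k] by simp
  qed
qed

lemma strict_mono_on_image:
  fixes I :: "'a::linorder \<Rightarrow> 'b::linorder"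
  assumes "strict_mono_on A I" and "strict_mono_on A (p \<circ> I)"
  shows "strict_mono_on (I ` A) p"
  using assms by (auto intro!: strict_mono_onI simp: strict_mono_on_less dest: strict_mono_onD)

lemma inv_count_comp_permutes_le:
  assumes tau: "\<tau> permutes P" and Pn: "P \<subseteq> {1..n}" and PK: "P \<subseteq> {a..<a + K}"
  shows "inv_count n (p \<circ> \<tau>) \<le> inv_count n p + 2 * card P * K"
proof -
  define inversions where
    "inversions s = {(i, j). i \<in> {1..n} \<and> j \<in> {1..n} \<and> i < j \<and> s i > s j}" for s :: "nat \<Rightarrow> nat"
  define near where "near = P \<times> {a..<a + K} \<union> {a..<a + K} \<times> P"
  \<comment> \<open>Outside \<open>near\<close>, \<open>\<tau>\<close> preserves \<open>i < j\<close>,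
    so \<open>(i, j) \<mapsto> (\<tau> i, \<tau> j)\<close> sends inversions to inversions.\<close>
  have finP: "finite P" using PK finite_subset by blast
  have card_near: "card near \<le> 2 * card P * K"
    using card_Un_le[of "P \<times> {a..<a + K}" "{a..<a + K} \<times> P"]
    unfolding near_def by (simp add: card_cartesian_product mult.commute)
  have tau_n: "\<tau> permutes {1..n}" using tau Pn by (rule permutes_subset)
  have "(\<lambda>(i, j). (\<tau> i, \<tau> j)) ` (inversions (p \<circ> \<tau>) - near) \<subseteq> inversions p"
  proof clarify
    fix i j assume ij: "(i, j) \<in> inversions (p \<circ> \<tau>)" "(i, j) \<notin> near"
    have "\<tau> i < \<tau> j"
      using ij PK permutes_not_in[OF tau] permutes_in_image[OF tau, of i] permutes_in_image[OF tau, of j]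
      unfolding inversions_def near_def by (auto simp: subset_iff)
    then show "(\<tau> i, \<tau> j) \<in> inversions p"
      using ij permutes_in_image[OF tau_n] unfolding inversions_def by auto
  qed
  moreover have "inj_on (\<lambda>(i, j). (\<tau> i, \<tau> j)) X" for X
    using permutes_inj[OF tau] by (auto simp: inj_on_def dest: injD)
  moreover have fin: "finite (inversions s)" for s
    by (rule finite_subset[of _ "{1..n} \<times> {1..n}"]) (auto simp: inversions_def)
  ultimately have "card (inversions (p \<circ> \<tau>) - near) \<le> card (inversions p)"
    by (intro card_inj_on_le)
  moreover have "card (inversions (p \<circ> \<tau>) \<inter> near) \<le> card near"
    by (rule card_mono) (auto simp: near_def finP)
  ultimately show ?thesis
    using card_near card_Int_Diff[OF fin, of "p \<circ> \<tau>" near] unfolding inv_count_def inversions_def by linarith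
qed

definition mallows_weight :: "nat \<Rightarrow> real \<Rightarrow> ((nat \<Rightarrow> nat) \<Rightarrow> bool) \<Rightarrow> real" where
  "mallows_weight n q E = (\<Sum>p\<in>{p \<in> perms n. E p}. q ^ inv_count n p)"

lemma finite_perms: "finite (perms n)"
  unfolding perms_def by (rule finite_permutations) simp

lemma mallows_weight_nonneg: "0 \<le> q \<Longrightarrow> 0 \<le> mallows_weight n q E"
  unfolding mallows_weight_def by (intro sum_nonneg) simp

lemma mallows_weight_mono:
  assumes "\<And>p. p \<in> perms n \<Longrightarrow> A p \<Longrightarrow> E p" and "0 \<le> q"
  shows "mallows_weight n q A \<le> mallows_weight n q E"
  unfolding mallows_weight_def using assms finite_perms by (intro sum_mono2) auto

lemma mallows_weight_True: "mallows_weight n q (\<lambda>_. True) = Z_mallows n q"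
  unfolding mallows_weight_def Z_mallows_def by simp

lemma Z_mallows_ge_1:
  assumes "0 \<le> q"
  shows "1 \<le> Z_mallows n q"
proof -
  have "inv_count n id = 0" unfolding inv_count_def by (auto simp: card_eq_0_iff)
  moreover have "id \<in> perms n" unfolding perms_def by simp
  ultimately show ?thesis
    unfolding Z_mallows_def using finite_perms assms by (metis member_le_sum power_0 zero_le_power)
qed

lemma mallows_prob_eq: "mallows_prob n q E = mallows_weight n q E / Z_mallows n q"
  unfolding mallows_prob_def mallows_weight_def mallows_def by (simp add: sum_divide_distrib)

lemma mallows_prob_mono:
  assumes "\<And>p. p \<in> perms n \<Longrightarrow> A p \<Longrightarrow> E p" and "0 \<le> q"
  shows "mallows_prob n q A \<le> mallows_prob n q E"
  unfolding mallows_prob_eq using mallows_weight_mono[OF assms] Z_mallows_ge_1[OF assms(2), of n]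
  by (simp add: divide_right_mono)

lemma mallows_prob_le_1: "0 \<le> q \<Longrightarrow> mallows_prob n q E \<le> 1"
  using mallows_prob_mono[of n E "\<lambda>_. True" q] Z_mallows_ge_1[of q n]
  by (simp add: mallows_prob_eq mallows_weight_True)

lemma mallows_weight_strict_mono_on_le:
  assumes Pn: "P \<subseteq> {1..n}" and PK: "P \<subseteq> {a..<a + K}" and q0: "0 \<le> q" and q1: "q \<le> 1"
    and closed: "\<And>p \<tau>. p \<in> perms n \<Longrightarrow> E p \<Longrightarrow> \<tau> permutes P \<Longrightarrow> E (p \<circ> \<tau>)"
  shows "mallows_weight n q (\<lambda>p. E p \<and> strict_mono_on P p) * fact (card P) * q ^ (2 * card P * K)
           \<le> mallows_weight n q E"
proof -
  define F where "F = {p \<in> perms n. E p \<and> strict_mono_on P p}"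
  define G where "G = {\<tau>. \<tau> permutes P}"
  define D where "D = 2 * card P * K"
  have finP: "finite P" using PK finite_subset by blast
  have card_G: "card G = fact (card P)" unfolding G_def using finP by (intro card_permutations) simp_all
  have inj: "inj_on (\<lambda>(p, \<tau>). p \<circ> \<tau>) (F \<times> G)"
    by (rule inj_on_subset[OF comp_permutes_inj_on]) (auto simp: F_def G_def)
  have "(\<lambda>(p, \<tau>). p \<circ> \<tau>) ` (F \<times> G) \<subseteq> {p \<in> perms n. E p}"
    using closed Pn unfolding F_def G_def perms_def
    by (auto intro: permutes_compose permutes_subset)
  then have "(\<Sum>\<sigma>\<in>(\<lambda>(p, \<tau>). p \<circ> \<tau>) ` (F \<times> G). q ^ inv_count n \<sigma>) \<le> mallows_weight n q E"
    unfolding mallows_weight_def using finite_perms q0 by (intro sum_mono2) auto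
  then have "(\<Sum>(p, \<tau>)\<in>F \<times> G. q ^ inv_count n (p \<circ> \<tau>)) \<le> mallows_weight n q E"
    using inj by (simp add: sum.reindex comp_def case_prod_unfold)
  moreover have "q ^ (inv_count n p + D) \<le> q ^ inv_count n (p \<circ> \<tau>)" if "\<tau> \<in> G" for p \<tau>
    using that inv_count_comp_permutes_le[OF _ Pn PK] q0 q1 unfolding G_def D_def
    by (intro power_decreasing) auto
  then have "(\<Sum>(p, \<tau>)\<in>F \<times> G. q ^ (inv_count n p + D)) \<le> (\<Sum>(p, \<tau>)\<in>F \<times> G. q ^ inv_count n (p \<circ> \<tau>))"
    by (intro sum_mono) auto
  moreover have "(\<Sum>(p, \<tau>)\<in>F \<times> G. q ^ (inv_count n p + D))
      = mallows_weight n q (\<lambda>p. E p \<and> strict_mono_on P p) * card G * q ^ D"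
    unfolding mallows_weight_def F_def
    by (simp add: sum.cartesian_product[symmetric] power_add sum_distrib_left sum_distrib_right mult_ac)
  ultimately show ?thesis using card_G unfolding D_def by simp
qed

lemma mallows_weight_strict_mono_on_blocks_le:
  fixes B :: "nat \<Rightarrow> nat set" and t :: nat
  assumes Bn: "\<And>b. B b \<subseteq> {1..n}" and BK: "\<And>b. B b \<subseteq> {a b..<a b + K}"
    and disj: "\<And>b c. b \<noteq> c \<Longrightarrow> B b \<inter> B c = {}" and q0: "0 \<le> q" and q1: "q \<le> 1"
  shows "mallows_weight n q (\<lambda>p. \<forall>b<t. strict_mono_on (B b) p) * (\<Prod>b<t. fact (card (B b)))
           * q ^ (2 * K * (\<Sum>b<t. card (B b))) \<le> Z_mallows n q"
proof (induction t)
  case 0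
  show ?case by (simp add: mallows_weight_True)
next
  case (Suc t)
  define E where "E p \<longleftrightarrow> (\<forall>b<t. strict_mono_on (B b) p)" for p :: "nat \<Rightarrow> nat"
  define R where "R = (\<Prod>b<t. fact (card (B b))) * q ^ (2 * K * (\<Sum>b<t. card (B b)))"
  have "E (p \<circ> \<tau>)" if "E p" "\<tau> permutes B t" for p \<tau>
  proof -
    have "\<forall>x\<in>B b. (p \<circ> \<tau>) x = p x" if "b < t" for b
    proof
      fix x assume "x \<in> B b"
      then have "x \<notin> B t" using disj[of b t] that by auto
      then show "(p \<circ> \<tau>) x = p x" using permutes_not_in[OF \<open>\<tau> permutes B t\<close>] by simp
    qed
    then show ?thesis using \<open>E p\<close> unfolding E_def strict_mono_on_def by auto
  qed
  then have "mallows_weight n q (\<lambda>p. E p \<and> strict_mono_on (B t) p) * fact (card (B t))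
      * q ^ (2 * card (B t) * K) \<le> mallows_weight n q E"
    by (intro mallows_weight_strict_mono_on_le[OF Bn[of t] BK[of t] q0 q1])
  then have "mallows_weight n q (\<lambda>p. E p \<and> strict_mono_on (B t) p) * fact (card (B t))
      * q ^ (2 * card (B t) * K) * R \<le> mallows_weight n q E * R"
    using q0 unfolding R_def by (intro mult_right_mono mult_nonneg_nonneg prod_nonneg) auto
  also have "\<dots> \<le> Z_mallows n q" using Suc.IH unfolding E_def R_def by (simp add: mult.assoc)
  finally have "mallows_weight n q (\<lambda>p. E p \<and> strict_mono_on (B t) p)
      * (fact (card (B t)) * q ^ (2 * card (B t) * K) * R) \<le> Z_mallows n q"
    by (simp only: mult.assoc)
  moreover have "(\<lambda>p. \<forall>b<Suc t. strict_mono_on (B b) p) = (\<lambda>p. E p \<and> strict_mono_on (B t) p)"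
    unfolding E_def by (auto simp: less_Suc_eq)
  moreover have "(\<Prod>b<Suc t. fact (card (B b))) * q ^ (2 * K * (\<Sum>b<Suc t. card (B b)))
      = fact (card (B t)) * q ^ (2 * card (B t) * K) * R"
    unfolding R_def by (simp add: power_add distrib_left mult_ac)
  ultimately show ?case by (simp only: mult.assoc)
qed

lemma mallows_weight_strict_mono_on_le_power:
  assumes Sn: "S \<subseteq> {1..n}" and K: "1 \<le> K" and q0: "0 \<le> q" and q1: "q \<le> 1"
  shows "mallows_weight n q (strict_mono_on S) * fact (card S) * q ^ (2 * K * card S)
           \<le> Z_mallows n q * real (n div K + 1) ^ card S"
proof -
  define t where "t = n div K + 1"
  define B where "B b = {x \<in> S. x div K = b}" for b
  define Q where "Q = q ^ (2 * K * card S)"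
  have BK: "B b \<subseteq> {b * K..<b * K + K}" for b
    using K dividend_less_div_times[of K] by (auto simp: B_def add.commute)
  have S_eq: "S = (\<Union>b<t. B b)"
    using Sn by (auto simp: B_def t_def less_Suc_eq_le div_le_mono)
  have disj: "b \<noteq> c \<Longrightarrow> B b \<inter> B c = {}" for b c by (auto simp: B_def)
  have card_S: "card S = (\<Sum>b<t. card (B b))"
    unfolding S_eq using Sn by (intro card_UN_disjoint) (auto simp: B_def finite_subset disj)
  have "mallows_weight n q (strict_mono_on S) \<le> mallows_weight n q (\<lambda>p. \<forall>b<t. strict_mono_on (B b) p)"
    using q0 S_eq by (intro mallows_weight_mono) (auto intro: monotone_on_subset)
  moreover have "fact (card S) \<le> (\<Prod>b<t. fact (card (B b))) * real t ^ card S"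
    using of_nat_mono[OF fact_sum_le_prod_fact_mult_power[of "\<lambda>b. card (B b)" t]]
    unfolding card_S by simp
  ultimately have "mallows_weight n q (strict_mono_on S) * fact (card S) * Q
      \<le> mallows_weight n q (\<lambda>p. \<forall>b<t. strict_mono_on (B b) p) * ((\<Prod>b<t. fact (card (B b))) * real t ^ card S) * Q"
    using q0 unfolding Q_def by (intro mult_mono mult_nonneg_nonneg prod_nonneg mallows_weight_nonneg) auto
  also have "\<dots> = (mallows_weight n q (\<lambda>p. \<forall>b<t. strict_mono_on (B b) p) * (\<Prod>b<t. fact (card (B b))) * Q)
      * real t ^ card S"
    by (simp add: mult_ac)
  also have "\<dots> \<le> Z_mallows n q * real t ^ card S"
    using mallows_weight_strict_mono_on_blocks_le[of B n "\<lambda>b. b * K" K q t] Sn BK disj q0 q1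
    unfolding Q_def card_S by (intro mult_right_mono) (auto simp: B_def)
  finally show ?thesis unfolding Q_def t_def .
qed

lemma mallows_prob_strict_mono_on_le_large_q:
  assumes Sn: "S \<subseteq> {1..n}" and m: "card S = m" "1 \<le> m"
    and q: "1/2 \<le> q" "q \<le> 1 - 2 / real n"
  shows "mallows_prob n q (strict_mono_on S) \<le> (3 * exp 5 * real n * (1 - q) / real m) ^ m"
proof -
  define l where "l = 1 - q"
  have "m \<le> n" using card_mono[OF _ Sn] m by simp
  then have n: "0 < n" using m by simp
  then have "0 < 2 / real n" by simp
  then have l: "0 < l" "l \<le> 1/2" using q unfolding l_def by linarith+
  have nl: "2 \<le> real n * l" using q n unfolding l_def by (simp add: field_simps)
  obtain K :: nat where K: "1 \<le> K" "1 / real K \<le> 2 * l" "real K * l \<le> 1"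
    using ex_nat_between_inverses[OF l] by blast
  define t where "t = n div K + 1"
  have q01: "0 \<le> q" "q \<le> 1" using q l unfolding l_def by auto
  have denom: "(real m / exp 5) ^ m \<le> fact m * q ^ (2 * K * m)"
  proof -
    have "(real m / exp 5) ^ m = real m ^ m / exp (real m) * exp (-4) ^ m"
      by (simp add: exp_of_nat_mult[symmetric] field_simps exp_add[symmetric])
    also have "\<dots> \<le> fact m * (q ^ (2 * K)) ^ m"
      using power_le_exp_mult_fact[of "real m" m] exp_neg_four_le_power[OF l(1)[THEN less_imp_le] l(2) K(3)]
      unfolding l_def by (intro mult_mono power_mono) (auto simp: pos_divide_le_eq mult.commute)
    finally show ?thesis by (simp add: power_mult)
  qed
  have Z: "0 < Z_mallows n q" using Z_mallows_ge_1[OF q01(1), of n] by simp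
  have D: "0 < fact m * q ^ (2 * K * m)" using q by simp
  have "mallows_weight n q (strict_mono_on S) * (fact m * q ^ (2 * K * m)) \<le> Z_mallows n q * real t ^ m"
    using mallows_weight_strict_mono_on_le_power[OF Sn K(1) q01] m unfolding t_def by (simp add: mult.assoc)
  then have "mallows_prob n q (strict_mono_on S) \<le> real t ^ m / (fact m * q ^ (2 * K * m))"
    using Z D unfolding mallows_prob_eq by (simp add: field_simps)
  also have "\<dots> \<le> real t ^ m / (real m / exp 5) ^ m"
    using denom m by (intro divide_left_mono mult_pos_pos D) auto
  also have "\<dots> = (exp 5 * real t / real m) ^ m" by (simp add: field_simps)
  also have "\<dots> \<le> (3 * exp 5 * real n * l / real m) ^ m"
  proof (intro power_mono divide_right_mono)
    have "real (n div K) \<le> real n * (1 / real K)"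
      using of_nat_div_le_of_nat[of n K] by simp
    also have "\<dots> \<le> real n * (2 * l)" using K(2) by (intro mult_left_mono) auto
    finally show "exp 5 * real t \<le> 3 * exp 5 * real n * l"
      using nl unfolding t_def by simp
  qed auto
  finally show ?thesis unfolding l_def .
qed

lemma mallows_prob_strict_mono_on_le:
  assumes Sn: "S \<subseteq> {1..n}" and m: "card S = m" "1 \<le> m"
    and q: "0 < q" "q \<le> 1 - 2 / real n"
  shows "mallows_prob n q (strict_mono_on S) \<le> (3 * exp 5 * real n * (1 - q) / real m) ^ m"
proof (cases "1/2 \<le> q")
  case True
  then show ?thesis using mallows_prob_strict_mono_on_le_large_q[OF Sn m] q by simp
next
  case False
  have "m \<le> n" using card_mono[OF _ Sn] m by simp
  moreover have "1 * (1/2) \<le> exp 5 * (1 - q)"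
    using False by (intro mult_mono) auto
  then have "1 \<le> 3 * exp 5 * (1 - q)" by simp
  ultimately have "real m \<le> 3 * exp 5 * real n * (1 - q)"
    using mult_mono[of 1 "3 * exp 5 * (1 - q)" "real m" "real n"] by (simp add: mult_ac)
  then have "1 \<le> (3 * exp 5 * real n * (1 - q) / real m) ^ m"
    using m by (intro one_le_power) (simp add: le_divide_eq)
  with mallows_prob_le_1 q show ?thesis by (meson less_imp_le order_trans)
qed

theorem proposition4p4:
  "\<exists>C::real. C > 0 \<and>
     (\<forall>(n::nat) (q::real) (m::nat) (I::nat \<Rightarrow> nat).
        n \<ge> 1 \<longrightarrow> 0 < q \<longrightarrow> q \<le> 1 - 2 / real n \<longrightarrow>
        1 \<le> m \<longrightarrow> m \<le> n \<longrightarrow>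
        strict_mono_on {1..m} I \<longrightarrow> I ` {1..m} \<subseteq> {1..n} \<longrightarrow>
        mallows_prob n q (\<lambda>p. \<forall>k\<in>{1..m-1}. p (I (k+1)) > p (I k))
          \<le> (C * real n * (1 - q) / real m) ^ m)"
proof (intro exI[of _ "3 * exp 5"] conjI allI impI)
  show "0 < 3 * exp (5::real)" by simp
  fix n m :: nat and q :: real and I :: "nat \<Rightarrow> nat"
  assume q: "0 < q" "q \<le> 1 - 2 / real n" and m: "1 \<le> m"
    and I: "strict_mono_on {1..m} I" "I ` {1..m} \<subseteq> {1..n}"
  have "mallows_prob n q (\<lambda>p. \<forall>k\<in>{1..m-1}. p (I (k+1)) > p (I k))
      \<le> mallows_prob n q (strict_mono_on (I ` {1..m}))"
  proof (rule mallows_prob_mono)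
    fix p :: "nat \<Rightarrow> nat" assume "\<forall>k\<in>{1..m-1}. p (I (k+1)) > p (I k)"
    then have "strict_mono_on {1..m} (p \<circ> I)"
      by (intro strict_mono_on_atLeastAtMost_Suc) auto
    with I(1) show "strict_mono_on (I ` {1..m}) p" by (rule strict_mono_on_image)
  qed (use q in auto)
  also have "\<dots> \<le> (3 * exp 5 * real n * (1 - q) / real m) ^ m"
    using I q m by (intro mallows_prob_strict_mono_on_le) (auto simp: card_image strict_mono_on_imp_inj_on)
  finally show "mallows_prob n q (\<lambda>p. \<forall>k\<in>{1..m-1}. p (I (k+1)) > p (I k))
      \<le> (3 * exp 5 * real n * (1 - q) / real m) ^ m" .
qed

end
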